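(* Let $\{a_n\}_{n\ge1}$ be a sequence of positive real numbers and let $\lambda>0$. Suppose that \[ \frac{a_{2n}}{a_n}=\frac12-\frac{\beta_1}{\ln(\lambda n)}+\frac{\epsilon_1(n)}{\ln(\lambda n)},\qquad \frac{a_{2n+1}}{a_n}=\frac12-\frac{\beta_2}{\ln(\lambda n)}+\frac{\epsilon_2(n)}{\ln(\lambda n)}, \] where $\beta_1,\beta_2$ are real constants independent of $n$ and $\epsilon_1(n)\to0$, $\epsilon_2(n)\to0$ as $n\to\infty$. Let $m=\min\{\beta_1,\beta_2\}$ and $M=\max\{\beta_1,\beta_2\}$. Then: (i) if $m>\frac{\ln2}{2}$, then $\sum_{n=1}^\infty a_n$ converges; (ii) if $M<\frac{\ln2}{2}$, then $\sum_{n=1}^\infty a_n$ diverges.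
   Context: Here $\ln$ denotes the natural logarithm. *)

theory Defs
  imports "HOL-Analysis.Analysis"
begin

end

theory Submission
  imports Defs
begin

(* Group the series into the dyadic blocks S k = (sum of a n over 2^k <= n < 2^(k+1)).
   The children 2n and 2n+1 of the indices of block k fill block k+1, so adding the two
   hypotheses gives S (k+1) = (sum over block k of a n * (1 - gamma n / ln (lam n))) with
   gamma n --> beta1 + beta2, while ln (lam n) lies between ln lam + k ln 2 and
   ln lam + (k+1) ln 2 on block k.  Hence S (k+1) / S k = 1 - (beta1 + beta2) / (k ln 2)
   up to lower-order terms, and Kummer's test with weights ln lam + k ln 2 (Raabe's test
   for the blocks) decides the series by comparing beta1 + beta2 with ln 2.  The bounds on
   min and max in the theorem are only used through this sum. *)

lemma not_summable_inverse_linear: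
  fixes A B :: real
  assumes "B > 0"
  shows "\<not> summable (\<lambda>k. inverse (A + real k * B))"
proof
  assume summable: "summable (\<lambda>k. inverse (A + real k * B))"
  define C where "C = \<bar>A\<bar> + B"
  have "C > 0" using assms by (simp add: C_def)
  have "\<forall>\<^sub>F k in sequentially. norm (inverse C * inverse (real k)) \<le> inverse (A + real k * B)"
  proof (rule eventually_mono[OF eventually_conj[OF eventually_gt_at_top[of 0]
      filterlim_real_sequentially[unfolded filterlim_at_top_dense, rule_format, of "- A / B"]]])
    fix k :: nat assume k: "0 < k \<and> - A / B < real k"
    then have pos: "0 < A + real k * B" using assms by (simp add: field_simps)
    have "A \<le> \<bar>A\<bar> * real k"
      using k mult_left_mono[of 1 "real k" "\<bar>A\<bar>"] by simp
    then have "A + real k * B \<le> C * real k"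
      by (simp add: C_def algebra_simps)
    then show "norm (inverse C * inverse (real k)) \<le> inverse (A + real k * B)"
      using pos \<open>C > 0\<close> k by (simp add: field_simps)
  qed
  then have "summable (\<lambda>k. inverse C * inverse (real k))"
    using summable by (rule summable_comparison_test_ev)
  then show False
    using \<open>C > 0\<close> not_summable_harmonic[where 'a = real] by simp
qed

definition dyadic_block :: "(nat \<Rightarrow> 'a::comm_monoid_add) \<Rightarrow> nat \<Rightarrow> 'a" where
  "dyadic_block f k = sum f {2^k..<2^Suc k}"

lemma dyadic_block_Suc:
  "dyadic_block f (Suc k) = (\<Sum>n = 2^k..<2^Suc k. f (2*n) + f (Suc (2*n)))"
proof -
  have two_power_ge_1: "(2::nat)^k \<ge> 1" by simp
  have "{2^Suc k..<2^Suc (Suc k)} = {2 * 2^k..Suc (2 * (2^Suc k - 1 :: nat))}"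
    and "{2^k..<2^Suc k} = {2^k..2^Suc k - 1 :: nat}"
    by (auto simp: set_eq_iff) (use two_power_ge_1 in linarith)+
  then show ?thesis
    unfolding dyadic_block_def by (simp only: sum.in_pairs)
qed

lemma sum_dyadic_blocks: "(\<Sum>k<N. dyadic_block f k) = sum f {1..<2^N}"
proof (induction N)
  case (Suc N)
  have "sum f {1..<2^N} + sum f {2^N..<2^Suc N} = sum f {1..<2^Suc N}"
    by (rule sum.atLeastLessThan_concat) simp_all
  with Suc show ?case by (simp add: dyadic_block_def)
qed simp

lemma mult_dyadic_block_Suc_le:
  fixes f :: "nat \<Rightarrow> real"
  assumes "\<And>n. n \<in> {2^k..<2^Suc k} \<Longrightarrow> r * (f (2*n) + f (Suc (2*n))) \<le> s * f n"
  shows "r * dyadic_block f (Suc k) \<le> s * dyadic_block f k"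
  unfolding dyadic_block_Suc sum_distrib_left
  by (simp only: dyadic_block_def sum_distrib_left) (rule sum_mono[OF assms])

lemma mult_dyadic_block_Suc_ge:
  fixes f :: "nat \<Rightarrow> real"
  assumes "\<And>n. n \<in> {2^k..<2^Suc k} \<Longrightarrow> s * f n \<le> r * (f (2*n) + f (Suc (2*n)))"
  shows "s * dyadic_block f k \<le> r * dyadic_block f (Suc k)"
  unfolding dyadic_block_Suc sum_distrib_left
  by (simp only: dyadic_block_def sum_distrib_left) (rule sum_mono[OF assms])

lemma summable_iff_summable_dyadic_block:
  fixes f :: "nat \<Rightarrow> real"
  assumes nonneg: "\<And>n. n \<ge> 1 \<Longrightarrow> f n \<ge> 0"
  shows "summable (\<lambda>n. f (Suc n)) \<longleftrightarrow> summable (dyadic_block f)"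
proof -
  have partial_sums: "(\<Sum>n<N. f (Suc n)) = sum f {1..<Suc N}" for N
    by (metis One_nat_def atLeast0LessThan sum.shift_bounds_Suc_ivl)
  have block_nonneg: "dyadic_block f k \<ge> 0" for k
    unfolding dyadic_block_def using nonneg
    by (intro sum_nonneg) (metis atLeastLessThan_iff le_trans one_le_power one_le_numeral)
  show ?thesis
  proof
    assume "summable (\<lambda>n. f (Suc n))"
    show "summable (dyadic_block f)"
    proof (rule summableI_nonneg_bounded[OF block_nonneg])
      fix N
      have "(\<Sum>k<N. dyadic_block f k) = (\<Sum>n<2^N - 1. f (Suc n))"
        by (simp add: sum_dyadic_blocks partial_sums)
      also have "\<dots> \<le> (\<Sum>n. f (Suc n))"
        using \<open>summable (\<lambda>n. f (Suc n))\<close> nonneg by (intro sum_le_suminf) auto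
      finally show "(\<Sum>k<N. dyadic_block f k) \<le> (\<Sum>n. f (Suc n))" .
    qed
  next
    assume "summable (dyadic_block f)"
    show "summable (\<lambda>n. f (Suc n))"
    proof (rule summableI_nonneg_bounded)
      fix N
      have "(\<Sum>n<N. f (Suc n)) \<le> sum f {1..<2^N}"
        unfolding partial_sums using nonneg
        by (intro sum_mono2) (auto simp: Suc_le_eq)
      also have "\<dots> \<le> suminf (dyadic_block f)"
        unfolding sum_dyadic_blocks[symmetric]
        using \<open>summable (dyadic_block f)\<close> block_nonneg by (intro sum_le_suminf) auto
      finally show "(\<Sum>n<N. f (Suc n)) \<le> suminf (dyadic_block f)" .
    qed (use nonneg in simp)
  qed
qed

lemma eventually_all_ge_two_power:
  assumes "\<forall>\<^sub>F n in sequentially. P n"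
  shows "\<forall>\<^sub>F k in sequentially. \<forall>n \<ge> 2^k. P n"
proof -
  have "filterlim (\<lambda>k. 2^k :: nat) sequentially sequentially"
    by (intro filterlim_subseq strict_monoI) simp
  with eventually_all_ge_at_top[OF assms] show ?thesis
    by (rule eventually_compose_filterlim)
qed

lemma mult_one_minus_divide_le:
  fixes u L D c \<gamma> :: real
  assumes "0 \<le> u" "0 < L" "L \<le> D" "0 < c" "c \<le> \<gamma>"
  shows "D * (u * (1 - \<gamma> / L)) \<le> (D - c) * u"
proof -
  have "c / D \<le> c / L" using assms by (intro divide_left_mono) auto
  also have "\<dots> \<le> \<gamma> / L" using assms by (intro divide_right_mono) auto
  finally have "D * (1 - \<gamma> / L) \<le> D * (1 - c / D)"
    using assms by (intro mult_left_mono) auto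
  also have "\<dots> = D - c" using assms by (simp add: field_simps)
  finally have "D * (1 - \<gamma> / L) * u \<le> (D - c) * u"
    using \<open>0 \<le> u\<close> by (rule mult_right_mono)
  then show ?thesis by (simp only: mult_ac)
qed

lemma mult_one_minus_divide_ge:
  fixes u L E c \<gamma> :: real
  assumes "0 \<le> u" "0 < E" "E \<le> L" "0 \<le> c" "\<gamma> \<le> c"
  shows "(E - c) * u \<le> E * (u * (1 - \<gamma> / L))"
proof -
  have "\<gamma> / L \<le> c / L" using assms by (intro divide_right_mono) auto
  also have "\<dots> \<le> c / E" using assms by (intro divide_left_mono) auto
  finally have "E * (1 - c / E) \<le> E * (1 - \<gamma> / L)"
    using assms by (intro mult_left_mono) auto
  moreover have "E * (1 - c / E) = E - c" using assms by (simp add: field_simps)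
  ultimately have "(E - c) * u \<le> E * (1 - \<gamma> / L) * u"
    using \<open>0 \<le> u\<close> by (metis mult_right_mono)
  then show ?thesis by (simp only: mult_ac)
qed

context
  fixes a :: "nat \<Rightarrow> real" and lam \<beta> :: real and \<gamma> :: "nat \<Rightarrow> real"
  assumes pos: "\<And>n. n \<ge> 1 \<Longrightarrow> a n > 0"
    and lam: "lam > 0"
    and pair_sum: "\<forall>\<^sub>F n in sequentially.
      a (2*n) + a (Suc (2*n)) = a n * (1 - \<gamma> n / ln (lam * real n))"
    and \<gamma>_limit: "\<gamma> \<longlonglongrightarrow> \<beta>"
begin

lemma pos_if_ge_two_power: "2^k \<le> n \<Longrightarrow> 0 < a n"
  by (metis le_trans one_le_numeral one_le_power pos)

lemma dyadic_block_pos: "0 < dyadic_block a k"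
  unfolding dyadic_block_def by (intro sum_pos) (auto intro: pos_if_ge_two_power)

lemma summable_Suc_iff_summable_dyadic_block:
  "summable (\<lambda>n. a (Suc n)) \<longleftrightarrow> summable (dyadic_block a)"
  using pos by (intro summable_iff_summable_dyadic_block) (simp add: less_imp_le)

lemma ln_lam_two_power: "ln (lam * 2^k) = ln lam + real k * ln 2"
  using lam by (simp add: ln_mult ln_realpow)

lemma eventually_gt_ln_lam_two_power: "\<forall>\<^sub>F k in sequentially. x < ln (lam * 2^k)"
proof -
  have "\<forall>\<^sub>F k in sequentially. (x - ln lam) / ln 2 < real k"
    using filterlim_real_sequentially by (simp add: filterlim_at_top_dense)
  then show ?thesis
    by eventually_elim (simp add: ln_lam_two_power field_simps)
qed

lemma ln_on_dyadic_block:
  assumes "n \<in> {2^k..<2^Suc k}"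
  shows "ln (lam * 2^k) \<le> ln (lam * real n)" and "ln (lam * real n) \<le> ln (lam * 2^Suc k)"
proof -
  have "2^k \<le> n" and "n \<le> 2^Suc k"
    using assms by simp_all
  then have lower: "(2::real)^k \<le> real n" and upper: "real n \<le> 2^Suc k"
    by (metis of_nat_le_iff of_nat_numeral of_nat_power)+
  have "0 < real n"
    using lower zero_less_power[of "2::real" k] by linarith
  with lower upper lam
  show "ln (lam * 2^k) \<le> ln (lam * real n)" and "ln (lam * real n) \<le> ln (lam * 2^Suc k)"
    by (auto intro!: ln_mono mult_left_mono)
qed

lemma eventually_dyadic_block_Suc_le:
  assumes "0 < c" "c < \<beta>"
  shows "\<forall>\<^sub>F k in sequentially. ln (lam * 2^Suc k) * dyadic_block a (Suc k)
           \<le> (ln (lam * 2^Suc k) - c) * dyadic_block a k"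
proof -
  have "\<forall>\<^sub>F n in sequentially.
      c \<le> \<gamma> n \<and> a (2*n) + a (Suc (2*n)) = a n * (1 - \<gamma> n / ln (lam * real n))"
    using order_tendstoD(1)[OF \<gamma>_limit \<open>c < \<beta>\<close>] pair_sum by eventually_elim simp
  then have "\<forall>\<^sub>F k in sequentially. \<forall>n \<ge> 2^k.
      c \<le> \<gamma> n \<and> a (2*n) + a (Suc (2*n)) = a n * (1 - \<gamma> n / ln (lam * real n))"
    by (rule eventually_all_ge_two_power)
  with eventually_gt_ln_lam_two_power[of 0] show ?thesis
  proof eventually_elim
    fix k assume ln_pos: "0 < ln (lam * 2^k)" and block: "\<forall>n \<ge> 2^k.
      c \<le> \<gamma> n \<and> a (2*n) + a (Suc (2*n)) = a n * (1 - \<gamma> n / ln (lam * real n))"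
    show "ln (lam * 2^Suc k) * dyadic_block a (Suc k) \<le> (ln (lam * 2^Suc k) - c) * dyadic_block a k"
    proof (rule mult_dyadic_block_Suc_le)
      fix n :: nat assume n: "n \<in> {2^k..<2^Suc k}"
      then have "2^k \<le> n" by simp
      with block have "c \<le> \<gamma> n"
        and eq: "a (2*n) + a (Suc (2*n)) = a n * (1 - \<gamma> n / ln (lam * real n))"
        by simp_all
      have "0 \<le> a n" using pos_if_ge_two_power[OF \<open>2^k \<le> n\<close>] by simp
      moreover have "0 < ln (lam * real n)"
        using ln_on_dyadic_block(1)[OF n] ln_pos by linarith
      ultimately show "ln (lam * 2^Suc k) * (a (2*n) + a (Suc (2*n))) \<le> (ln (lam * 2^Suc k) - c) * a n"
        unfolding eq using ln_on_dyadic_block(2)[OF n] \<open>0 < c\<close> \<open>c \<le> \<gamma> n\<close>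
        by (rule mult_one_minus_divide_le)
    qed
  qed
qed

lemma eventually_dyadic_block_Suc_ge:
  assumes "0 \<le> c" "\<beta> < c"
  shows "\<forall>\<^sub>F k in sequentially. (ln (lam * 2^k) - c) * dyadic_block a k
           \<le> ln (lam * 2^k) * dyadic_block a (Suc k)"
proof -
  have "\<forall>\<^sub>F n in sequentially.
      \<gamma> n \<le> c \<and> a (2*n) + a (Suc (2*n)) = a n * (1 - \<gamma> n / ln (lam * real n))"
    using order_tendstoD(2)[OF \<gamma>_limit \<open>\<beta> < c\<close>] pair_sum by eventually_elim simp
  then have "\<forall>\<^sub>F k in sequentially. \<forall>n \<ge> 2^k.
      \<gamma> n \<le> c \<and> a (2*n) + a (Suc (2*n)) = a n * (1 - \<gamma> n / ln (lam * real n))"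
    by (rule eventually_all_ge_two_power)
  with eventually_gt_ln_lam_two_power[of 0] show ?thesis
  proof eventually_elim
    fix k assume ln_pos: "0 < ln (lam * 2^k)" and block: "\<forall>n \<ge> 2^k.
      \<gamma> n \<le> c \<and> a (2*n) + a (Suc (2*n)) = a n * (1 - \<gamma> n / ln (lam * real n))"
    show "(ln (lam * 2^k) - c) * dyadic_block a k \<le> ln (lam * 2^k) * dyadic_block a (Suc k)"
    proof (rule mult_dyadic_block_Suc_ge)
      fix n :: nat assume n: "n \<in> {2^k..<2^Suc k}"
      then have "2^k \<le> n" by simp
      with block have "\<gamma> n \<le> c"
        and eq: "a (2*n) + a (Suc (2*n)) = a n * (1 - \<gamma> n / ln (lam * real n))"
        by simp_all
      have "0 \<le> a n" using pos_if_ge_two_power[OF \<open>2^k \<le> n\<close>] by simp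
      then show "(ln (lam * 2^k) - c) * a n \<le> ln (lam * 2^k) * (a (2*n) + a (Suc (2*n)))"
        unfolding eq using ln_pos ln_on_dyadic_block(1)[OF n] \<open>0 \<le> c\<close> \<open>\<gamma> n \<le> c\<close>
        by (rule mult_one_minus_divide_ge)
    qed
  qed
qed

lemma summable_if_gt_ln2:
  assumes "ln 2 < \<beta>"
  shows "summable (\<lambda>n. a (Suc n))"
proof -
  define c where "c = (ln 2 + \<beta>) / 2"
  have c: "ln 2 < c" "c < \<beta>" using assms by (simp_all add: c_def)
  moreover have "0 < ln (2::real)" by simp
  ultimately have "0 < c" by linarith
  (* Shifting the weights by c turns the block inequality into Kummer's condition
     with the constant c - ln 2. *)
  define p where "p k = ln (lam * 2^Suc k) - c" for k
  have p_Suc: "p (Suc k) = ln (lam * 2^Suc k) + ln 2 - c" for k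
    by (simp only: p_def ln_lam_two_power) (simp add: algebra_simps)
  have p_pos: "\<forall>\<^sub>F k in sequentially. 0 < p k"
    using eventually_gt_ln_lam_two_power[of c]
    by (subst (asm) eventually_sequentially_Suc[symmetric]) (simp add: p_def)
  have "\<forall>\<^sub>F k in sequentially. ln (lam * 2^Suc k) * dyadic_block a (Suc k) \<le> p k * dyadic_block a k"
    using eventually_dyadic_block_Suc_le[OF \<open>0 < c\<close> c(2)] unfolding p_def .
  then have ratio: "\<forall>\<^sub>F k in sequentially.
      c - ln 2 \<le> p k * dyadic_block a k / dyadic_block a (Suc k) - p (Suc k)"
  proof eventually_elim
    fix k
    assume "ln (lam * 2^Suc k) * dyadic_block a (Suc k) \<le> p k * dyadic_block a k"
    then have "ln (lam * 2^Suc k) \<le> p k * dyadic_block a k / dyadic_block a (Suc k)"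
      using dyadic_block_pos by (simp add: pos_le_divide_eq)
    then show "c - ln 2 \<le> p k * dyadic_block a k / dyadic_block a (Suc k) - p (Suc k)"
      using p_Suc[of k] by linarith
  qed
  have "summable (dyadic_block a)"
  proof (rule kummers_test_convergence)
    show "\<forall>\<^sub>F k in sequentially. 0 < dyadic_block a k"
      by (simp add: dyadic_block_pos)
    show "\<forall>\<^sub>F k in sequentially. 0 \<le> p k"
      using p_pos by eventually_elim simp
    have "ereal 0 < ereal (c - ln 2)" using c by simp
    also have "\<dots> \<le> liminf (\<lambda>k. ereal (p k * dyadic_block a k / dyadic_block a (Suc k) - p (Suc k)))"
      using ratio by (intro Liminf_bounded) simp
    finally show "0 < liminf (\<lambda>k. ereal (p k * dyadic_block a k / dyadic_block a (Suc k) - p (Suc k)))"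
      by (simp add: zero_ereal_def)
  qed
  then show ?thesis
    by (simp add: summable_Suc_iff_summable_dyadic_block)
qed

lemma not_summable_if_lt_ln2:
  assumes "\<beta> < ln 2"
  shows "\<not> summable (\<lambda>n. a (Suc n))"
proof -
  define c where "c = (max \<beta> 0 + ln 2) / 2"
  have c: "0 \<le> c" "\<beta> < c" "c < ln 2" using assms by (auto simp: c_def)
  define p where "p k = ln (lam * 2^k) - c" for k
  have p_Suc: "p (Suc k) = ln (lam * 2^k) + ln 2 - c" for k
    by (simp only: p_def ln_lam_two_power) (simp add: algebra_simps)
  have "\<forall>\<^sub>F k in sequentially. p k * dyadic_block a k \<le> ln (lam * 2^k) * dyadic_block a (Suc k)"
    using eventually_dyadic_block_Suc_ge[OF c(1,2)] unfolding p_def .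
  then have ratio: "\<forall>\<^sub>F k in sequentially.
      p k * dyadic_block a k / dyadic_block a (Suc k) - p (Suc k) \<le> c - ln 2"
  proof eventually_elim
    fix k
    assume "p k * dyadic_block a k \<le> ln (lam * 2^k) * dyadic_block a (Suc k)"
    then have "p k * dyadic_block a k / dyadic_block a (Suc k) \<le> ln (lam * 2^k)"
      using dyadic_block_pos by (simp add: pos_divide_le_eq)
    then show "p k * dyadic_block a k / dyadic_block a (Suc k) - p (Suc k) \<le> c - ln 2"
      using p_Suc[of k] by linarith
  qed
  have "\<not> summable (dyadic_block a)"
  proof (rule kummers_test_divergence)
    show "\<forall>\<^sub>F k in sequentially. 0 < dyadic_block a k"
      by (simp add: dyadic_block_pos)
    show "\<forall>\<^sub>F k in sequentially. 0 < p k"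
      using eventually_gt_ln_lam_two_power[of c] by (simp add: p_def)
    have "inverse (p k) = inverse ((ln lam - c) + real k * ln 2)" for k
      by (simp only: p_def ln_lam_two_power) (simp add: algebra_simps)
    then show "\<not> summable (\<lambda>k. inverse (p k))"
      using not_summable_inverse_linear[of "ln 2" "ln lam - c"] by simp
    have "limsup (\<lambda>k. ereal (p k * dyadic_block a k / dyadic_block a (Suc k) - p (Suc k)))
        \<le> ereal (c - ln 2)"
      using ratio by (intro Limsup_bounded) simp
    also have "\<dots> < ereal 0" using c by simp
    finally show "limsup (\<lambda>k. ereal (p k * dyadic_block a k / dyadic_block a (Suc k) - p (Suc k))) < 0"
      by (simp add: zero_ereal_def)
  qed
  then show ?thesis
    by (simp add: summable_Suc_iff_summable_dyadic_block)
qed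

end

theorem corollary2p1p1:
  fixes a :: "nat \<Rightarrow> real" and lam \<beta>1 \<beta>2 :: real
    and \<epsilon>1 \<epsilon>2 :: "nat \<Rightarrow> real"
  assumes pos: "\<And>n. n \<ge> 1 \<Longrightarrow> a n > 0"
    and lam: "lam > 0"
    and eq1: "\<forall>\<^sub>F n in sequentially.
               a (2*n) / a n = 1/2 - \<beta>1 / ln (lam * real n) + \<epsilon>1 n / ln (lam * real n)"
    and eq2: "\<forall>\<^sub>F n in sequentially.
               a (2*n+1) / a n = 1/2 - \<beta>2 / ln (lam * real n) + \<epsilon>2 n / ln (lam * real n)"
    and lim1: "\<epsilon>1 \<longlonglongrightarrow> 0"
    and lim2: "\<epsilon>2 \<longlonglongrightarrow> 0"
  shows "(min \<beta>1 \<beta>2 > ln 2 / 2 \<longrightarrow> summable (\<lambda>n. a (Suc n)))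
       \<and> (max \<beta>1 \<beta>2 < ln 2 / 2 \<longrightarrow> \<not> summable (\<lambda>n. a (Suc n)))"
proof -
  define \<gamma> where "\<gamma> n = \<beta>1 + \<beta>2 - (\<epsilon>1 n + \<epsilon>2 n)" for n
  have "\<gamma> \<longlonglongrightarrow> \<beta>1 + \<beta>2 - (0 + 0)"
    unfolding \<gamma>_def by (intro tendsto_intros lim1 lim2)
  then have \<gamma>_limit: "\<gamma> \<longlonglongrightarrow> \<beta>1 + \<beta>2" by simp
  have pair_sum: "\<forall>\<^sub>F n in sequentially.
      a (2*n) + a (Suc (2*n)) = a n * (1 - \<gamma> n / ln (lam * real n))"
    using eq1 eq2 eventually_ge_at_top[of 1]
  proof eventually_elim
    case (elim n)
    then have "a (2*n) + a (Suc (2*n)) = a n * (a (2*n) / a n + a (2*n+1) / a n)"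
      using pos[of n] by (simp add: field_simps)
    with elim show ?case by (simp add: \<gamma>_def diff_divide_distrib add_divide_distrib)
  qed
  show ?thesis
    using summable_if_gt_ln2[OF pos lam pair_sum \<gamma>_limit]
      not_summable_if_lt_ln2[OF pos lam pair_sum \<gamma>_limit]
    by auto
qed

end
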